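(* Let $k$ be the squared exponential kernel on $\mathcal{D}\subset\mathbb{R}^d$. Let $X\subset\mathcal{D}$ be a finite set and $X^{\mathrm s}\subset X$. For any finite $X^{\mathrm a}\subset\mathcal{D}$, let $K$ and $\tilde K$ be the kernel matrices on $X$ and on $X\cup X^{\mathrm a}$ respectively, let $U$ be the Nyström approximation of $K$ based on $X^{\mathrm s}$, and $\tilde U$ the Nyström approximation of $\tilde K$ based on $X^{\mathrm s}\cup X^{\mathrm a}$. Then $$\mathrm{tr}(\tilde K-\tilde U)\le\mathrm{tr}(K-U).$$
   Context: For a dataset $X=\{x_1,\dots,x_N\}$ with kernel matrix $K_{XX}=[k(x_i,x_j)]_{i,j}$ and $S=\{x_{s_1},\dots,x_{s_M}\}\subset X$, the Nyström approximation of $K_{XX}$ based on $S$ is $U_{XX}=K_{XS}K_{SS}^\dagger K_{SX}$, where $K_{XS}=[k(x_i,x_{s_j})]_{i,j}$, $K_{SS}=[k(x_{s_i},x_{s_j})]_{i,j}$ and $\dagger$ denotes the pseudoinverse. *)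

theory Defs
  imports "HOL-Analysis.Analysis"
begin

text \<open>Matrices indexed by (finite) sets of points are represented as functions
  of two indices; only the entries with indices in the relevant index sets matter.\<close>

text \<open>Squared exponential kernel with signal standard deviation sf and lengthscale l.\<close>
definition se_kernel :: "real \<Rightarrow> real \<Rightarrow> real^'d \<Rightarrow> real^'d \<Rightarrow> real" where
  "se_kernel sf l x y = sf\<^sup>2 * exp (- (norm (x - y))\<^sup>2 / (2 * l\<^sup>2))"

definition smat_mult :: "'i set \<Rightarrow> ('r \<Rightarrow> 'i \<Rightarrow> real) \<Rightarrow> ('i \<Rightarrow> 'c \<Rightarrow> real) \<Rightarrow> 'r \<Rightarrow> 'c \<Rightarrow> real" where
  "smat_mult I A B = (\<lambda>i j. \<Sum>k\<in>I. A i k * B k j)"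

definition is_pinv :: "'i set \<Rightarrow> ('i \<Rightarrow> 'i \<Rightarrow> real) \<Rightarrow> ('i \<Rightarrow> 'i \<Rightarrow> real) \<Rightarrow> bool" where
  "is_pinv S A B \<longleftrightarrow>
     (\<forall>i\<in>S. \<forall>j\<in>S. smat_mult S (smat_mult S A B) A i j = A i j) \<and>
     (\<forall>i\<in>S. \<forall>j\<in>S. smat_mult S (smat_mult S B A) B i j = B i j) \<and>
     (\<forall>i\<in>S. \<forall>j\<in>S. smat_mult S A B i j = smat_mult S A B j i) \<and>
     (\<forall>i\<in>S. \<forall>j\<in>S. smat_mult S B A i j = smat_mult S B A j i) \<and>
     (\<forall>i j. i \<notin> S \<or> j \<notin> S \<longrightarrow> B i j = 0)"

definition pinv :: "'i set \<Rightarrow> ('i \<Rightarrow> 'i \<Rightarrow> real) \<Rightarrow> 'i \<Rightarrow> 'i \<Rightarrow> real" where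
  "pinv S A = (THE B. is_pinv S A B)"

definition nystrom :: "('a \<Rightarrow> 'a \<Rightarrow> real) \<Rightarrow> 'a set \<Rightarrow> 'a \<Rightarrow> 'a \<Rightarrow> real" where
  "nystrom k S = smat_mult S (smat_mult S k (pinv S k)) k"

definition nystrom_trace_err :: "('a \<Rightarrow> 'a \<Rightarrow> real) \<Rightarrow> 'a set \<Rightarrow> 'a set \<Rightarrow> real" where
  "nystrom_trace_err k X S = (\<Sum>x\<in>X. k x x - nystrom k S x x)"

end

theory Submission
  imports Defs "Jordan_Normal_Form.Determinant"
begin

text \<open>
  Write k(x, y) = f x * f y * exp (x \<bullet> y / l^2), where f = se_weight sf l.
  Expanding exp into its power series shows that k is positive semidefinite; if a quadratic form
  sum c_x c_y k(x, y) vanishes, then sum c_x f x exp (y \<bullet> x / l^2) = 0 for every y, and along the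
  ray through a point of maximal norm the exponential of that point dominates, so all c_x vanish.
  Hence k is strictly positive definite, every kernel matrix K_TT is invertible, and its
  pseudoinverse is its inverse.

  Then U_xx is the maximum of 2 e K_Tx - e K_TT e over all e : T \<rightarrow> \<real> (expand the
  nonnegative form (e - g) K_TT (e - g) with g = K_xT K_TT^-1), so it increases with T, and
  U_xx = K_xx for x in T. Passing from (X, Xs) to (X \<union> Xa, Xs \<union> Xa) therefore does not increase
  the error at the points of X and creates no error at the new points Xa.
\<close>

(* Jordan_Normal_Form's scalar product of vectors also uses this symbol; here it is the inner product. *)
no_notation Matrix.scalar_prod (infix \<open>\<bullet>\<close> 70)

section \<open>Positive definite kernels\<close>

definition kernel_quad :: "'a set \<Rightarrow> ('a \<Rightarrow> 'a \<Rightarrow> real) \<Rightarrow> ('a \<Rightarrow> real) \<Rightarrow> real" where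
  "kernel_quad F K c = (\<Sum>x\<in>F. \<Sum>y\<in>F. c x * c y * K x y)"

definition psd_kernel :: "('a \<Rightarrow> 'a \<Rightarrow> real) \<Rightarrow> bool" where
  "psd_kernel K \<longleftrightarrow> (\<forall>F c. finite F \<longrightarrow> 0 \<le> kernel_quad F K c)"

definition spd_kernel :: "('a \<Rightarrow> 'a \<Rightarrow> real) \<Rightarrow> bool" where
  "spd_kernel K \<longleftrightarrow> psd_kernel K \<and> (\<forall>F c. finite F \<longrightarrow> kernel_quad F K c = 0 \<longrightarrow> (\<forall>x\<in>F. c x = 0))"

lemma psd_kernelI:
  "(\<And>F c. finite F \<Longrightarrow> 0 \<le> kernel_quad F K c) \<Longrightarrow> psd_kernel K"
  unfolding psd_kernel_def by blast

lemma psd_kernelD: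
  "psd_kernel K \<Longrightarrow> finite F \<Longrightarrow> 0 \<le> kernel_quad F K c"
  unfolding psd_kernel_def by blast

lemma kernel_quad_cong:
  "(\<And>x. x \<in> F \<Longrightarrow> c x = e x) \<Longrightarrow> kernel_quad F K c = kernel_quad F K e"
  unfolding kernel_quad_def by simp

lemma kernel_quad_mono_neutral:
  assumes "finite G" "F \<subseteq> G" "\<And>x. x \<in> G - F \<Longrightarrow> c x = 0"
  shows "kernel_quad G K c = kernel_quad F K c"
  unfolding kernel_quad_def
  by (rule sum.mono_neutral_cong_right) (use assms in \<open>auto intro!: sum.mono_neutral_right\<close>)

lemma kernel_quad_add:
  assumes "\<And>x y. K x y = K y x"
  shows "kernel_quad F K (\<lambda>x. c x + e x)
    = kernel_quad F K c + 2 * (\<Sum>x\<in>F. c x * (\<Sum>y\<in>F. e y * K x y)) + kernel_quad F K e"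
proof -
  have "(\<Sum>x\<in>F. \<Sum>y\<in>F. e x * c y * K x y) = (\<Sum>x\<in>F. c x * (\<Sum>y\<in>F. e y * K x y))"
    by (subst sum.swap) (simp add: sum_distrib_left assms mult_ac)
  then show ?thesis
    unfolding kernel_quad_def by (simp add: algebra_simps sum.distrib sum_distrib_left)
qed

lemma psd_kernel_rescale:
  assumes "psd_kernel K"
  shows "psd_kernel (\<lambda>x y. f x * f y * K x y)"
proof (rule psd_kernelI)
  fix F :: "'a set" and c :: "'a \<Rightarrow> real" assume "finite F"
  have "kernel_quad F (\<lambda>x y. f x * f y * K x y) c = kernel_quad F K (\<lambda>x. c x * f x)"
    unfolding kernel_quad_def by (simp add: mult_ac)
  then show "0 \<le> kernel_quad F (\<lambda>x y. f x * f y * K x y) c"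
    using psd_kernelD[OF assms \<open>finite F\<close>] by simp
qed

lemma linear_coeff_zero_if_quadratic_nonneg:
  fixes b C :: real
  assumes "\<And>t. 0 \<le> 2 * t * b + t\<^sup>2 * C"
  shows "b = 0"
proof -
  have "C \<ge> 0" using assms[of 1] assms[of "-1"] by simp
  define t where "t = - b / (C + 1)"
  have "t * (C + 1) = - b" unfolding t_def using \<open>C \<ge> 0\<close> by simp
  have "(C + 1)\<^sup>2 * (2 * t * b + t\<^sup>2 * C) = 2 * (t * (C + 1)) * b * (C + 1) + (t * (C + 1))\<^sup>2 * C"
    by (simp add: algebra_simps power2_eq_square)
  also have "\<dots> = - (b\<^sup>2 * (C + 2))"
    unfolding \<open>t * (C + 1) = - b\<close> by (simp add: algebra_simps power2_eq_square)
  finally have "(C + 1)\<^sup>2 * (2 * t * b + t\<^sup>2 * C) = - (b\<^sup>2 * (C + 2))" .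
  moreover have "0 \<le> (C + 1)\<^sup>2 * (2 * t * b + t\<^sup>2 * C)"
    using assms[of t] by simp
  ultimately have "b\<^sup>2 * (C + 2) \<le> 0" by linarith
  then show "b = 0"
    using \<open>C \<ge> 0\<close> by (auto simp: mult_le_0_iff)
qed

text \<open>Perturbing c in the direction of the point y must not make the quadratic form negative.\<close>
lemma psd_kernel_quad_zero_imp_orthogonal:
  assumes psd: "psd_kernel K" and sym: "\<And>x y. K x y = K y x"
    and "finite F" and zero: "kernel_quad F K c = 0"
  shows "(\<Sum>x\<in>F. c x * K y x) = 0"
proof (rule linear_coeff_zero_if_quadratic_nonneg)
  fix t :: real
  define G where "G = insert y F"
  define u where "u x = of_bool (x \<in> F) * c x" for x
  define v where "v x = of_bool (x = y) * t" for x
  have "finite G" and G_y: "G \<inter> {x. x = y} = {y}" and G_F: "G \<inter> {x. x \<in> F} = F"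
    using \<open>finite F\<close> by (auto simp: G_def)
  have "kernel_quad G K u = kernel_quad F K u"
    using \<open>finite G\<close> by (intro kernel_quad_mono_neutral) (auto simp: G_def u_def)
  also have "\<dots> = kernel_quad F K c"
    by (rule kernel_quad_cong) (simp add: u_def)
  finally have quad_u: "kernel_quad G K u = 0"
    using zero by simp
  have v_section: "(\<Sum>z\<in>G. v z * K x z) = t * K x y" for x
    unfolding v_def by (simp only: mult.assoc sum_of_bool_mult_eq[OF \<open>finite G\<close>] G_y) simp
  then have cross: "(\<Sum>x\<in>G. u x * (\<Sum>z\<in>G. v z * K x z)) = t * (\<Sum>x\<in>F. c x * K y x)"
    unfolding u_def by (simp only: mult.assoc sum_of_bool_mult_eq[OF \<open>finite G\<close>] G_F)
      (simp add: sum_distrib_left sym[of y] mult_ac)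
  have "kernel_quad G K v = (\<Sum>x\<in>G. v x * (\<Sum>z\<in>G. v z * K x z))"
    unfolding kernel_quad_def by (simp add: sum_distrib_left mult.assoc)
  also have "\<dots> = t\<^sup>2 * K y y"
    unfolding v_section unfolding v_def
    by (simp only: mult.assoc sum_of_bool_mult_eq[OF \<open>finite G\<close>] G_y) (simp add: power2_eq_square)
  finally have quad_v: "kernel_quad G K v = t\<^sup>2 * K y y" .
  have "0 \<le> kernel_quad G K (\<lambda>x. u x + v x)"
    by (rule psd_kernelD[OF psd \<open>finite G\<close>])
  also have "\<dots> = 2 * t * (\<Sum>x\<in>F. c x * K y x) + t\<^sup>2 * K y y"
    unfolding kernel_quad_add[OF sym] quad_u cross quad_v by simp
  finally show "0 \<le> 2 * t * (\<Sum>x\<in>F. c x * K y x) + t\<^sup>2 * K y y" .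
qed

section \<open>The squared exponential kernel is strictly positive definite\<close>

lemma psd_kernel_inner_power: "psd_kernel (\<lambda>x y :: 'a :: euclidean_space. (x \<bullet> y) ^ n)"
proof (induction n)
  case 0
  show ?case
    by (rule psd_kernelI) (simp add: kernel_quad_def sum_product[symmetric])
next
  case (Suc n)
  show ?case
  proof (rule psd_kernelI)
    fix F :: "'a set" and c :: "'a \<Rightarrow> real" assume "finite F"
    have "kernel_quad F (\<lambda>x y. (x \<bullet> y) ^ Suc n) c
        = (\<Sum>x\<in>F. \<Sum>y\<in>F. \<Sum>b\<in>Basis. (c x * (x \<bullet> b)) * (c y * (y \<bullet> b)) * (x \<bullet> y) ^ n)"
      unfolding kernel_quad_def power_Suc
      by (intro sum.cong refl) (subst (1) euclidean_inner, simp add: sum_distrib_left sum_distrib_right mult_ac)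
    also have "\<dots> = (\<Sum>b\<in>Basis. kernel_quad F (\<lambda>x y. (x \<bullet> y) ^ n) (\<lambda>x. c x * (x \<bullet> b)))"
      unfolding kernel_quad_def by (simp add: sum.swap[where B = Basis])
    also have "\<dots> \<ge> 0"
      by (intro sum_nonneg psd_kernelD[OF Suc.IH \<open>finite F\<close>])
    finally show "0 \<le> kernel_quad F (\<lambda>x y. (x \<bullet> y) ^ Suc n) c" .
  qed
qed

lemma psd_kernel_exp_inner:
  assumes "a \<ge> 0"
  shows "psd_kernel (\<lambda>x y :: 'a :: euclidean_space. exp (a * (x \<bullet> y)))"
proof (rule psd_kernelI)
  fix F :: "'a set" and c :: "'a \<Rightarrow> real" assume "finite F"
  define t where "t n = a ^ n / fact n * kernel_quad F (\<lambda>x y. (x \<bullet> y) ^ n) c" for n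
  have "t sums kernel_quad F (\<lambda>x y. exp (a * (x \<bullet> y))) c"
  proof -
    have "(\<lambda>n. c x * c y * ((a * (x \<bullet> y)) ^ n / fact n)) sums (c x * c y * exp (a * (x \<bullet> y)))"
      for x y :: 'a
      using exp_converges[of "a * (x \<bullet> y)"] by (intro sums_mult) (simp add: divide_inverse mult.commute)
    then have "(\<lambda>n. kernel_quad F (\<lambda>x y. (a * (x \<bullet> y)) ^ n / fact n) c)
        sums kernel_quad F (\<lambda>x y. exp (a * (x \<bullet> y))) c"
      unfolding kernel_quad_def by (intro sums_sum)
    then show ?thesis
      unfolding t_def kernel_quad_def by (simp add: sum_distrib_left power_mult_distrib mult_ac)
  qed
  moreover have "t n \<ge> 0" for n
    unfolding t_def using assms psd_kernelD[OF psd_kernel_inner_power \<open>finite F\<close>] by simp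
  ultimately show "0 \<le> kernel_quad F (\<lambda>x y. exp (a * (x \<bullet> y))) c"
    using sums_unique suminf_nonneg sums_summable by metis
qed

definition se_weight :: "real \<Rightarrow> real \<Rightarrow> real^'d \<Rightarrow> real" where
  "se_weight sf l x = sf * exp (- (norm x)\<^sup>2 / (2 * l\<^sup>2))"

lemma se_kernel_eq_rescaled_exp_inner:
  assumes "l \<noteq> 0"
  shows "se_kernel sf l x y = se_weight sf l x * se_weight sf l y * exp ((1 / l\<^sup>2) * (x \<bullet> y))"
proof -
  have "(norm (x - y))\<^sup>2 = (norm x)\<^sup>2 + (norm y)\<^sup>2 - 2 * (x \<bullet> y)"
    by (simp add: power2_norm_eq_inner inner_diff_left inner_diff_right inner_commute)
  then have "- (norm (x - y))\<^sup>2 / (2 * l\<^sup>2)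
      = - (norm x)\<^sup>2 / (2 * l\<^sup>2) + - (norm y)\<^sup>2 / (2 * l\<^sup>2) + (1 / l\<^sup>2) * (x \<bullet> y)"
    using assms by (simp add: field_simps)
  then have "exp (- (norm (x - y))\<^sup>2 / (2 * l\<^sup>2)) = exp (- (norm x)\<^sup>2 / (2 * l\<^sup>2))
      * exp (- (norm y)\<^sup>2 / (2 * l\<^sup>2)) * exp ((1 / l\<^sup>2) * (x \<bullet> y))"
    by (simp only: exp_add)
  then show ?thesis
    unfolding se_kernel_def se_weight_def power2_eq_square by (simp only: mult_ac)
qed

lemma se_kernel_sym: "se_kernel sf l x y = se_kernel sf l y x"
  unfolding se_kernel_def by (simp add: norm_minus_commute)

lemma psd_kernel_se:
  assumes "l \<noteq> 0"
  shows "psd_kernel (se_kernel sf l :: real^'d \<Rightarrow> real^'d \<Rightarrow> real)"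
proof -
  have "psd_kernel (\<lambda>x y :: real^'d. exp ((1 / l\<^sup>2) * (x \<bullet> y)))"
    by (rule psd_kernel_exp_inner) simp
  then have "psd_kernel (\<lambda>x y :: real^'d. se_weight sf l x * se_weight sf l y * exp ((1 / l\<^sup>2) * (x \<bullet> y)))"
    by (rule psd_kernel_rescale)
  also have "\<dots> = se_kernel sf l"
    by (intro ext) (simp add: se_kernel_eq_rescaled_exp_inner[OF assms])
  finally show ?thesis .
qed

lemma exp_sum_dominant_coeff_zero:
  fixes r d :: "'a \<Rightarrow> real"
  assumes "finite F" "m \<in> F" and dominant: "\<And>x. x \<in> F - {m} \<Longrightarrow> r x < r m"
    and zero: "\<And>t. (\<Sum>x\<in>F. d x * exp (r x * t)) = 0"
  shows "d m = 0"
proof -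
  define f where "f t = d m + (\<Sum>x\<in>F - {m}. d x * exp ((r x - r m) * t))" for t
  have "f t = exp (- (r m * t)) * (\<Sum>x\<in>F. d x * exp (r x * t))" for t
  proof -
    have shift: "exp (- (r m * t)) * (d x * exp (r x * t)) = d x * exp ((r x - r m) * t)" for x
      by (simp add: left_diff_distrib mult.left_commute flip: exp_add)
    show ?thesis
      unfolding sum.remove[OF assms(1,2)] distrib_left sum_distrib_left shift f_def by simp
  qed
  then have "f = (\<lambda>_. 0)"
    using zero by (simp add: fun_eq_iff)
  then have "(f \<longlongrightarrow> 0) at_top"
    by simp
  moreover have "(f \<longlongrightarrow> d m + 0) at_top"
    unfolding f_def
  proof (intro tendsto_add tendsto_const tendsto_null_sum tendsto_mult_right_zero)
    fix x assume "x \<in> F - {m}"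
    then have "filterlim (\<lambda>t. (r x - r m) * t) at_bot at_top"
      using dominant by (intro filterlim_tendsto_neg_mult_at_bot[OF tendsto_const _ filterlim_ident]) simp
    then show "((\<lambda>t. exp ((r x - r m) * t)) \<longlongrightarrow> 0) at_top"
      by (rule filterlim_compose[OF exp_at_bot])
  qed
  ultimately show "d m = 0"
    using tendsto_unique[OF trivial_limit_at_top_linorder] by (metis add_0_right)
qed

lemma exp_inner_linear_independent:
  fixes F :: "'a :: real_inner set" and d :: "'a \<Rightarrow> real"
  assumes "finite F" "a > 0" and zero: "\<And>y. (\<Sum>x\<in>F. d x * exp (a * (y \<bullet> x))) = 0"
  shows "\<forall>x\<in>F. d x = 0"
proof (rule ccontr)
  define S where "S = {x \<in> F. d x \<noteq> 0}"
  assume "\<not> (\<forall>x\<in>F. d x = 0)"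
  then have "S \<noteq> {}" "finite S" using \<open>finite F\<close> by (auto simp: S_def)
  then obtain m where "m \<in> S" and m_Max: "Max (norm ` S) = norm m"
    using obtains_MAX[of S norm] by blast
  have m_max: "norm x \<le> norm m" if "x \<in> S" for x
    using Max_ge[OF finite_imageI[OF \<open>finite S\<close>] imageI[OF that, of norm]] m_Max by simp
  have "a * (m \<bullet> x) < a * (m \<bullet> m)" if "x \<in> S - {m}" for x
  proof -
    have "0 < (norm (m - x))\<^sup>2" using that by auto
    also have "\<dots> = m \<bullet> m - 2 * (m \<bullet> x) + x \<bullet> x"
      by (simp add: power2_norm_eq_inner inner_diff_left inner_diff_right inner_commute)
    also have "x \<bullet> x \<le> m \<bullet> m"
      using m_max[of x] that by (simp flip: power2_norm_eq_inner add: power_mono)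
    finally show ?thesis using \<open>a > 0\<close> by simp
  qed
  moreover have "(\<Sum>x\<in>S. d x * exp (a * (m \<bullet> x) * t)) = 0" for t
  proof -
    have "(\<Sum>x\<in>S. d x * exp (a * (m \<bullet> x) * t)) = (\<Sum>x\<in>F. d x * exp (a * ((t *\<^sub>R m) \<bullet> x)))"
      using \<open>finite F\<close> by (intro sum.mono_neutral_cong_left) (auto simp: S_def mult_ac)
    then show ?thesis using zero[of "t *\<^sub>R m"] by simp
  qed
  ultimately have "d m = 0"
    using exp_sum_dominant_coeff_zero[OF \<open>finite S\<close> \<open>m \<in> S\<close>, of "\<lambda>x. a * (m \<bullet> x)" d] by blast
  then show False using \<open>m \<in> S\<close> by (simp add: S_def)
qed

lemma spd_kernel_se:
  assumes "sf > 0" "l > 0"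
  shows "spd_kernel (se_kernel sf l :: real^'d \<Rightarrow> real^'d \<Rightarrow> real)"
  unfolding spd_kernel_def
proof (intro conjI allI impI ballI)
  show psd: "psd_kernel (se_kernel sf l :: real^'d \<Rightarrow> real^'d \<Rightarrow> real)"
    using \<open>l > 0\<close> by (simp add: psd_kernel_se)
  fix F :: "(real^'d) set" and c x
  assume "finite F" "kernel_quad F (se_kernel sf l) c = 0" "x \<in> F"
  have "(\<Sum>x\<in>F. c x * se_weight sf l x * exp ((1 / l\<^sup>2) * (y \<bullet> x))) = 0" for y
  proof -
    have "se_weight sf l y * (\<Sum>x\<in>F. c x * se_weight sf l x * exp ((1 / l\<^sup>2) * (y \<bullet> x)))
        = (\<Sum>x\<in>F. c x * se_kernel sf l y x)"
      using \<open>l > 0\<close> by (simp add: se_kernel_eq_rescaled_exp_inner sum_distrib_left mult_ac)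
    also have "\<dots> = 0"
      by (rule psd_kernel_quad_zero_imp_orthogonal[OF psd se_kernel_sym]) fact+
    finally show ?thesis using \<open>sf > 0\<close> by (simp add: se_weight_def)
  qed
  then have "\<forall>x\<in>F. c x * se_weight sf l x = 0"
    by (intro exp_inner_linear_independent[OF \<open>finite F\<close>, of "1 / l\<^sup>2"]) (use \<open>l > 0\<close> in simp_all)
  then show "c x = 0" using \<open>x \<in> F\<close> \<open>sf > 0\<close> by (simp add: se_weight_def)
qed

section \<open>Inverses of kernel matrices\<close>

definition is_inverse_on :: "'a set \<Rightarrow> ('a \<Rightarrow> 'a \<Rightarrow> real) \<Rightarrow> ('a \<Rightarrow> 'a \<Rightarrow> real) \<Rightarrow> bool" where
  "is_inverse_on T A B \<longleftrightarrow>
     (\<forall>i\<in>T. \<forall>j\<in>T. smat_mult T A B i j = of_bool (i = j) \<and> smat_mult T B A i j = of_bool (i = j)) \<and>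
     (\<forall>i j. i \<notin> T \<or> j \<notin> T \<longrightarrow> B i j = 0)"

lemma smat_mult_assoc:
  "smat_mult T (smat_mult T A B) C = smat_mult T A (smat_mult T B C)"
  unfolding smat_mult_def
  by (intro ext) (simp add: sum_distrib_left sum_distrib_right mult.assoc, rule sum.swap)

lemma smat_mult_cong_left:
  "(\<And>z. z \<in> T \<Longrightarrow> A i z = A' i z) \<Longrightarrow> smat_mult T A B i j = smat_mult T A' B i j"
  unfolding smat_mult_def by simp

lemma smat_mult_right_id:
  assumes "finite T" "j \<in> T" "\<And>z. z \<in> T \<Longrightarrow> E z j = of_bool (z = j)"
  shows "smat_mult T C E i j = C i j"
proof -
  have "smat_mult T C E i j = (\<Sum>z\<in>T. C i z * of_bool (z = j))"
    unfolding smat_mult_def using assms(3) by simp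
  also have "\<dots> = C i j"
    using assms(1,2) by simp
  finally show ?thesis .
qed

lemma smat_mult_left_id:
  assumes "finite T" "i \<in> T" "\<And>z. z \<in> T \<Longrightarrow> E i z = of_bool (i = z)"
  shows "smat_mult T E C i j = C i j"
proof -
  have "smat_mult T E C i j = (\<Sum>z\<in>T. of_bool (i = z) * C z j)"
    unfolding smat_mult_def using assms(3) by simp
  also have "\<dots> = C i j"
    using assms(1,2) by simp
  finally show ?thesis .
qed

lemma pinv_eq_if_inverse_on:
  assumes "finite T" and inv: "is_inverse_on T A B"
  shows "pinv T A = B"
proof -
  have AB: "smat_mult T A B i j = of_bool (i = j)" "smat_mult T B A i j = of_bool (i = j)"
    if "i \<in> T" "j \<in> T" for i j
    using inv that unfolding is_inverse_on_def by auto
  have "is_pinv T A B"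
    unfolding is_pinv_def
  proof (intro conjI ballI)
    fix i j assume "i \<in> T" "j \<in> T"
    show "smat_mult T (smat_mult T A B) A i j = A i j" "smat_mult T (smat_mult T B A) B i j = B i j"
      by (rule smat_mult_left_id[OF \<open>finite T\<close> \<open>i \<in> T\<close>], simp add: AB \<open>i \<in> T\<close>)+
    show "smat_mult T A B i j = smat_mult T A B j i" "smat_mult T B A i j = smat_mult T B A j i"
      by (simp_all add: AB \<open>i \<in> T\<close> \<open>j \<in> T\<close> eq_commute)
  qed (use inv in \<open>simp add: is_inverse_on_def\<close>)
  moreover have "B' = B" if "is_pinv T A B'" for B'
  proof -
    have ABA: "smat_mult T (smat_mult T A B') A i j = A i j" if "i \<in> T" "j \<in> T" for i j
      using \<open>is_pinv T A B'\<close> that unfolding is_pinv_def by blast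
    have AB': "smat_mult T A B' i j = of_bool (i = j)" if "i \<in> T" "j \<in> T" for i j
    proof -
      have "smat_mult T A B' i j = smat_mult T (smat_mult T A B') (smat_mult T A B) i j"
        using that by (intro smat_mult_right_id[symmetric] \<open>finite T\<close>) (auto simp: AB)
      also have "\<dots> = smat_mult T (smat_mult T (smat_mult T A B') A) B i j"
        by (simp only: smat_mult_assoc)
      also have "\<dots> = smat_mult T A B i j"
        using that by (intro smat_mult_cong_left) (simp add: ABA)
      finally show ?thesis using AB that by simp
    qed
    have "B' i j = B i j" if "i \<in> T" "j \<in> T" for i j
    proof -
      have "B' i j = smat_mult T (smat_mult T B A) B' i j"
        using that by (intro smat_mult_left_id[symmetric] \<open>finite T\<close>) (auto simp: AB)
      also have "\<dots> = smat_mult T B (smat_mult T A B') i j"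
        by (simp only: smat_mult_assoc)
      also have "\<dots> = B i j"
        using that by (intro smat_mult_right_id \<open>finite T\<close>) (auto simp: AB')
      finally show ?thesis .
    qed
    then show "B' = B"
      using \<open>is_pinv T A B'\<close> inv unfolding is_pinv_def is_inverse_on_def by (intro ext) metis
  qed
  ultimately show ?thesis
    unfolding pinv_def by (rule the_equality)
qed

lemma mat_inverse_exists_if_mult_vec_inj:
  fixes M :: "real mat"
  assumes M: "M \<in> carrier_mat n n" and inj: "\<And>v. v \<in> carrier_vec n \<Longrightarrow> M *\<^sub>v v = 0\<^sub>v n \<Longrightarrow> v = 0\<^sub>v n"
  obtains M' where "M' \<in> carrier_mat n n" "M * M' = 1\<^sub>m n" "M' * M = 1\<^sub>m n"
proof -
  have "Determinant.det M \<noteq> 0"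
    using inj by (auto simp: det_0_iff_vec_prod_zero_field[OF M])
  then show ?thesis
    using det_non_zero_imp_unit[OF M, of "()"] that by (auto simp: Units_def ring_mat_def)
qed

lemma finite_indexing:
  assumes "finite T"
  obtains el :: "nat \<Rightarrow> 'a" and n :: nat and ix :: "'a \<Rightarrow> nat"
  where "bij_betw el {..<n} T" "\<And>p. p < n \<Longrightarrow> ix (el p) = p"
    "\<And>x. x \<in> T \<Longrightarrow> ix x < n" "\<And>x. x \<in> T \<Longrightarrow> el (ix x) = x"
proof -
  obtain el where bij: "bij_betw el {..<card T} T"
    using ex_bij_betw_nat_finite[OF assms] by (auto simp: atLeast0LessThan)
  show ?thesis
  proof (rule that[OF bij, of "the_inv_into {..<card T} el"])
    show "the_inv_into {..<card T} el (el p) = p" if "p < card T" for p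
      using the_inv_into_f_f[OF bij_betw_imp_inj_on[OF bij]] that by simp
    show "the_inv_into {..<card T} el x < card T" "el (the_inv_into {..<card T} el x) = x" if "x \<in> T" for x
      using bij_betwE[OF bij_betw_the_inv_into[OF bij]] f_the_inv_into_f_bij_betw[OF bij] that by auto
  qed
qed

lemma inverse_on_exists:
  fixes A :: "'a \<Rightarrow> 'a \<Rightarrow> real"
  assumes "finite T"
    and inj: "\<And>c. (\<And>i. i \<in> T \<Longrightarrow> (\<Sum>j\<in>T. A i j * c j) = 0) \<Longrightarrow> \<forall>j\<in>T. c j = 0"
  shows "\<exists>B. is_inverse_on T A B"
proof -
  obtain el and n :: nat and ix where bij: "bij_betw el {..<n} T" and ix_el: "\<And>p. p < n \<Longrightarrow> ix (el p) = p"
    and ix: "\<And>x. x \<in> T \<Longrightarrow> ix x < n" "\<And>x. x \<in> T \<Longrightarrow> el (ix x) = x"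
    using finite_indexing[OF \<open>finite T\<close>] by blast
  have sum_T: "(\<Sum>z\<in>T. f z) = (\<Sum>p<n. f (el p))" for f :: "'a \<Rightarrow> real"
    using sum.reindex_bij_betw[OF bij, symmetric] by simp
  define M where "M = mat n n (\<lambda>(p, q). A (el p) (el q))"
  have M: "M \<in> carrier_mat n n" by (simp add: M_def)
  have M_entry: "M $$ (ix i, q) = A i (el q)" "M $$ (q, ix i) = A (el q) i" if "i \<in> T" "q < n" for i q
    using that ix by (simp_all add: M_def)
  have "v = 0\<^sub>v n" if v: "v \<in> carrier_vec n" "M *\<^sub>v v = 0\<^sub>v n" for v
  proof -
    have "(\<Sum>j\<in>T. A i j * v $ ix j) = (M *\<^sub>v v) $ ix i" if "i \<in> T" for i
      using v(1) that ix M_entry carrier_matD[OF M]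
      by (simp add: sum_T ix_el scalar_prod_def lessThan_atLeast0)
    then have "\<forall>j\<in>T. v $ ix j = 0"
      using v(2) ix by (intro inj) simp
    then show ?thesis
      using v(1) ix_el bij_betwE[OF bij] by (intro eq_vecI) (auto, metis lessThan_iff)
  qed
  then obtain M' where M': "M' \<in> carrier_mat n n" "M * M' = 1\<^sub>m n" "M' * M = 1\<^sub>m n"
    using mat_inverse_exists_if_mult_vec_inj[OF M] by blast
  define B where "B x y = (if x \<in> T \<and> y \<in> T then M' $$ (ix x, ix y) else 0)" for x y
  have "smat_mult T A B i j = (M * M') $$ (ix i, ix j)" "smat_mult T B A i j = (M' * M) $$ (ix i, ix j)"
    if "i \<in> T" "j \<in> T" for i j
    using that carrier_matD[OF M] carrier_matD[OF M'(1)] ix M_entry bij_betwE[OF bij]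
    by (simp_all add: smat_mult_def B_def sum_T ix_el scalar_prod_def lessThan_atLeast0)
  moreover have "ix i = ix j \<longleftrightarrow> i = j" if "i \<in> T" "j \<in> T" for i j
    using ix that by metis
  ultimately have "is_inverse_on T A B"
    unfolding is_inverse_on_def using M' ix by (auto simp: B_def)
  then show ?thesis by blast
qed

lemma spd_kernel_pinv_inverse_on:
  assumes "spd_kernel K" "finite T"
  shows "is_inverse_on T K (pinv T K)"
proof -
  have "\<exists>B. is_inverse_on T K B"
  proof (rule inverse_on_exists[OF \<open>finite T\<close>])
    fix c assume "\<And>i. i \<in> T \<Longrightarrow> (\<Sum>j\<in>T. K i j * c j) = 0"
    moreover have "kernel_quad T K c = (\<Sum>i\<in>T. c i * (\<Sum>j\<in>T. K i j * c j))"
      unfolding kernel_quad_def by (simp add: sum_distrib_left mult_ac)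
    ultimately have "kernel_quad T K c = 0"
      by simp
    then show "\<forall>j\<in>T. c j = 0"
      using assms unfolding spd_kernel_def by blast
  qed
  then show ?thesis
    using pinv_eq_if_inverse_on[OF \<open>finite T\<close>] by blast
qed

section \<open>Monotonicity of the Nystroem approximation\<close>

context
  fixes K :: "'a \<Rightarrow> 'a \<Rightarrow> real"
  assumes K_sym: "\<And>x y. K x y = K y x" and K_spd: "spd_kernel K"
begin

text \<open>Row x of K_xT K_TT^+, i.e. the coefficients of the projection of K x onto the span of the
  K t, t in T.\<close>
definition nystrom_coeff :: "'a set \<Rightarrow> 'a \<Rightarrow> 'a \<Rightarrow> real" where
  "nystrom_coeff T = smat_mult T K (pinv T K)"

lemma nystrom_eq_coeff: "nystrom K T x y = (\<Sum>s\<in>T. nystrom_coeff T x s * K s y)"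
  unfolding nystrom_def nystrom_coeff_def smat_mult_def ..

lemma nystrom_coeff_reproduces:
  assumes "finite T" "s \<in> T"
  shows "(\<Sum>t\<in>T. nystrom_coeff T x t * K t s) = K x s"
proof -
  have inv: "is_inverse_on T K (pinv T K)"
    by (rule spd_kernel_pinv_inverse_on[OF K_spd \<open>finite T\<close>])
  have "(\<Sum>t\<in>T. nystrom_coeff T x t * K t s) = smat_mult T K (smat_mult T (pinv T K) K) x s"
    unfolding nystrom_coeff_def smat_mult_assoc[symmetric] by (simp add: smat_mult_def)
  also have "\<dots> = K x s"
    using inv assms by (intro smat_mult_right_id) (auto simp: is_inverse_on_def)
  finally show ?thesis .
qed

lemma nystrom_diag_eq_kernel:
  assumes "finite T" "x \<in> T"
  shows "nystrom K T x x = K x x"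
  using nystrom_coeff_reproduces[OF assms] by (simp add: nystrom_eq_coeff)

lemma kernel_quad_nystrom_coeff:
  assumes "finite T"
  shows "kernel_quad T K (nystrom_coeff T x) = nystrom K T x x"
proof -
  have "kernel_quad T K (nystrom_coeff T x)
      = (\<Sum>s\<in>T. nystrom_coeff T x s * (\<Sum>t\<in>T. nystrom_coeff T x t * K t s))"
    unfolding kernel_quad_def by (simp add: sum_distrib_left K_sym mult_ac)
  also have "\<dots> = (\<Sum>s\<in>T. nystrom_coeff T x s * K s x)"
    using nystrom_coeff_reproduces[OF assms] by (simp add: K_sym[of x])
  finally show ?thesis by (simp add: nystrom_eq_coeff)
qed

text \<open>U_xx is the maximum of the left-hand side over all e, attained at e = nystrom_coeff T x.\<close>
lemma nystrom_diag_ge: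
  assumes "finite T"
  shows "2 * (\<Sum>s\<in>T. e s * K s x) - kernel_quad T K e \<le> nystrom K T x x"
proof -
  let ?g = "nystrom_coeff T x"
  have "0 \<le> kernel_quad T K (\<lambda>s. e s + (- ?g s))"
    using K_spd assms by (simp add: spd_kernel_def psd_kernelD)
  also have "\<dots> = kernel_quad T K e - 2 * (\<Sum>s\<in>T. e s * K s x) + nystrom K T x x"
  proof -
    have "(\<Sum>t\<in>T. - ?g t * K s t) = - K s x" if "s \<in> T" for s
      using nystrom_coeff_reproduces[OF assms that] by (simp add: sum_negf K_sym[of s])
    then have "(\<Sum>s\<in>T. e s * (\<Sum>t\<in>T. - ?g t * K s t)) = - (\<Sum>s\<in>T. e s * K s x)"
      by (simp add: sum_negf)
    moreover have "kernel_quad T K (\<lambda>s. - ?g s) = nystrom K T x x"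
      using kernel_quad_nystrom_coeff[OF assms] by (simp add: kernel_quad_def)
    ultimately show ?thesis
      unfolding kernel_quad_add[OF K_sym] by simp
  qed
  finally show ?thesis by simp
qed

lemma nystrom_diag_mono:
  assumes "finite T" "S \<subseteq> T"
  shows "nystrom K S x x \<le> nystrom K T x x"
proof -
  have "finite S" using assms finite_subset by blast
  define e where "e s = of_bool (s \<in> S) * nystrom_coeff S x s" for s
  have "T \<inter> {s. s \<in> S} = S" using \<open>S \<subseteq> T\<close> by blast
  then have "(\<Sum>s\<in>T. e s * K s x) = nystrom K S x x"
    unfolding e_def nystrom_eq_coeff
    by (simp only: mult.assoc sum_of_bool_mult_eq[OF \<open>finite T\<close>])
  moreover have "kernel_quad T K e = nystrom K S x x"
  proof -
    have "kernel_quad T K e = kernel_quad S K e"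
      using assms by (intro kernel_quad_mono_neutral) (auto simp: e_def)
    also have "\<dots> = kernel_quad S K (nystrom_coeff S x)"
      by (rule kernel_quad_cong) (simp add: e_def)
    finally show ?thesis
      by (simp add: kernel_quad_nystrom_coeff[OF \<open>finite S\<close>])
  qed
  ultimately show ?thesis
    using nystrom_diag_ge[OF \<open>finite T\<close>, of e x] by simp
qed

lemma nystrom_trace_err_augment_le:
  assumes "finite X" "Xs \<subseteq> X" "finite Xa"
  shows "nystrom_trace_err K (X \<union> Xa) (Xs \<union> Xa) \<le> nystrom_trace_err K X Xs"
proof -
  define T where "T = Xs \<union> Xa"
  have "finite T" using assms finite_subset unfolding T_def by blast
  have "nystrom_trace_err K (X \<union> Xa) T
      = (\<Sum>x\<in>X. K x x - nystrom K T x x) + (\<Sum>x\<in>Xa - X. K x x - nystrom K T x x)"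
    unfolding nystrom_trace_err_def Un_Diff_cancel[of X Xa, symmetric]
    using assms by (intro sum.union_disjoint) auto
  also have "(\<Sum>x\<in>Xa - X. K x x - nystrom K T x x) = 0"
    using nystrom_diag_eq_kernel[OF \<open>finite T\<close>] by (simp add: T_def)
  also have "(\<Sum>x\<in>X. K x x - nystrom K T x x) \<le> (\<Sum>x\<in>X. K x x - nystrom K Xs x x)"
    using nystrom_diag_mono[OF \<open>finite T\<close>] by (intro sum_mono) (simp add: T_def)
  finally show ?thesis
    unfolding T_def nystrom_trace_err_def by simp
qed

end

theorem lemma3p7:
  fixes sf l :: real and D X Xs Xa :: "(real^'d) set"
  assumes "sf > 0" and "l > 0"
    and "finite X" and "X \<subseteq> D" and "Xs \<subseteq> X"
    and "finite Xa" and "Xa \<subseteq> D"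
  shows "nystrom_trace_err (se_kernel sf l) (X \<union> Xa) (Xs \<union> Xa)
           \<le> nystrom_trace_err (se_kernel sf l) X Xs"
  using nystrom_trace_err_augment_le[OF se_kernel_sym spd_kernel_se[OF \<open>sf > 0\<close> \<open>l > 0\<close>]]
    \<open>finite X\<close> \<open>Xs \<subseteq> X\<close> \<open>finite Xa\<close>
  by blast

end
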